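(* Let $B$ be a Horn program, $E^+,E^-$ finite sets of ground atoms, and $H_1,H_2,H_3\in\mathcal{H}_{D,C}$ hypotheses with $H_3$ a generalization of $H_1$. If $S_{MDL}(H_2,B,E^+,E^-) - S_{MDL}(H_1,B,E^+,E^-) > fn(H_1,B,E^+) - (size(H_3)-size(H_1))$, then $S_{MDL}(H_2,B,E^+,E^-) > S_{MDL}(H_3,B,E^+,E^-)$.
   Context: A definite clause is a clause with exactly one positive literal. A hypothesis is a finite set of definite clauses; $\mathcal{H}_{D,C}$ denotes the hypothesis space of hypotheses consistent with a declaration bias $D$ and hypothesis constraints $C$ (only membership matters). $size(H)$ is the total number of literals in $H$. $B$ is background knowledge, $E^+$ positive and $E^-$ negative examples. For a hypothesis $H$: $tp(H,B,E^+)=|\{e\in E^+ : H\cup B\models e\}|$, $tn(H,B,E^-)=|\{e\in E^- : H\cup B\not\models e\}|$, $fn(H,B,E^+)=|E^+|-tp(H,B,E^+)$, and $S_{MDL}(H,B,E^+,E^-)=tp(H,B,E^+)+tn(H,B,E^-)-size(H)$. A clause $C_1$ subsumes a clause $C_2$ iff there is a substitution $\theta$ with $C_1\theta\subseteq C_2$. A clausal theory $T_1$ subsumes $T_2$ ($T_1\preceq T_2$) iff every clause of $T_2$ is subsumed by some clause of $T_1$. $T_1$ is a generalization of $T_2$ iff $T_1\preceq T_2$, and a specialization of $T_2$ iff $T_2\preceq T_1$. *)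

theory Defs
  imports Main
begin

datatype ('f, 'v) trm = Var 'v | Fun 'f "('f, 'v) trm list"

type_synonym ('p, 'f, 'v) atom = "'p \<times> ('f, 'v) trm list"

datatype ('p, 'f, 'v) lit = Pos "('p, 'f, 'v) atom" | Neg "('p, 'f, 'v) atom"

type_synonym ('p, 'f, 'v) clause = "('p, 'f, 'v) lit set"

fun subst_trm :: "('v \<Rightarrow> ('f, 'v) trm) \<Rightarrow> ('f, 'v) trm \<Rightarrow> ('f, 'v) trm" where
  "subst_trm \<theta> (Var x) = \<theta> x"
| "subst_trm \<theta> (Fun f ts) = Fun f (map (subst_trm \<theta>) ts)"

definition subst_atom :: "('v \<Rightarrow> ('f, 'v) trm) \<Rightarrow> ('p, 'f, 'v) atom \<Rightarrow> ('p, 'f, 'v) atom" where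
  "subst_atom \<theta> a = (fst a, map (subst_trm \<theta>) (snd a))"

fun subst_lit :: "('v \<Rightarrow> ('f, 'v) trm) \<Rightarrow> ('p, 'f, 'v) lit \<Rightarrow> ('p, 'f, 'v) lit" where
  "subst_lit \<theta> (Pos a) = Pos (subst_atom \<theta> a)"
| "subst_lit \<theta> (Neg a) = Neg (subst_atom \<theta> a)"

definition subst_cls :: "('v \<Rightarrow> ('f, 'v) trm) \<Rightarrow> ('p, 'f, 'v) clause \<Rightarrow> ('p, 'f, 'v) clause" where
  "subst_cls \<theta> C = subst_lit \<theta> ` C"

fun vars_trm :: "('f, 'v) trm \<Rightarrow> 'v set" where
  "vars_trm (Var x) = {x}"
| "vars_trm (Fun f ts) = (\<Union>t\<in>set ts. vars_trm t)"

definition ground_trm :: "('f, 'v) trm \<Rightarrow> bool" where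
  "ground_trm t \<longleftrightarrow> vars_trm t = {}"

definition ground_atom :: "('p, 'f, 'v) atom \<Rightarrow> bool" where
  "ground_atom a \<longleftrightarrow> (\<forall>t\<in>set (snd a). ground_trm t)"

definition is_pos :: "('p, 'f, 'v) lit \<Rightarrow> bool" where
  "is_pos l \<longleftrightarrow> (\<exists>a. l = Pos a)"

definition definite_clause :: "('p, 'f, 'v) clause \<Rightarrow> bool" where
  "definite_clause C \<longleftrightarrow> finite C \<and> card {l \<in> C. is_pos l} = 1"

definition hypothesis :: "('p, 'f, 'v) clause set \<Rightarrow> bool" where
  "hypothesis H \<longleftrightarrow> finite H \<and> (\<forall>C\<in>H. definite_clause C)"

definition horn_program :: "('p, 'f, 'v) clause set \<Rightarrow> bool" where
  "horn_program B \<longleftrightarrow> finite B \<and> (\<forall>C\<in>B. definite_clause C)"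

definition hsize :: "('p, 'f, 'v) clause set \<Rightarrow> nat" where
  "hsize H = (\<Sum>C\<in>H. card C)"

type_synonym ('p, 'f, 'v) interp = "('p, 'f, 'v) atom set"

fun lit_true :: "('p, 'f, 'v) interp \<Rightarrow> ('p, 'f, 'v) lit \<Rightarrow> bool" where
  "lit_true I (Pos a) \<longleftrightarrow> a \<in> I"
| "lit_true I (Neg a) \<longleftrightarrow> a \<notin> I"

definition ground_subst :: "('v \<Rightarrow> ('f, 'v) trm) \<Rightarrow> bool" where
  "ground_subst \<sigma> \<longleftrightarrow> (\<forall>x. ground_trm (\<sigma> x))"

text \<open>A clause (implicitly universally closed) is true in a Herbrand interpretation
  iff every ground instance contains a true literal.\<close>
definition clause_true :: "('p, 'f, 'v) interp \<Rightarrow> ('p, 'f, 'v) clause \<Rightarrow> bool" where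
  "clause_true I C \<longleftrightarrow> (\<forall>\<sigma>. ground_subst \<sigma> \<longrightarrow> (\<exists>l\<in>C. lit_true I (subst_lit \<sigma> l)))"

definition is_model :: "('p, 'f, 'v) interp \<Rightarrow> ('p, 'f, 'v) clause set \<Rightarrow> bool" where
  "is_model I T \<longleftrightarrow> (\<forall>C\<in>T. clause_true I C)"

definition entails :: "('p, 'f, 'v) clause set \<Rightarrow> ('p, 'f, 'v) atom \<Rightarrow> bool" where
  "entails T e \<longleftrightarrow> (\<forall>I. is_model I T \<longrightarrow> e \<in> I)"

definition tp :: "('p, 'f, 'v) clause set \<Rightarrow> ('p, 'f, 'v) clause set \<Rightarrow> ('p, 'f, 'v) atom set \<Rightarrow> nat" where
  "tp H B Ep = card {e \<in> Ep. entails (H \<union> B) e}"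

definition tn :: "('p, 'f, 'v) clause set \<Rightarrow> ('p, 'f, 'v) clause set \<Rightarrow> ('p, 'f, 'v) atom set \<Rightarrow> nat" where
  "tn H B En = card {e \<in> En. \<not> entails (H \<union> B) e}"

definition fn :: "('p, 'f, 'v) clause set \<Rightarrow> ('p, 'f, 'v) clause set \<Rightarrow> ('p, 'f, 'v) atom set \<Rightarrow> nat" where
  "fn H B Ep = card Ep - tp H B Ep"

definition S_MDL :: "('p, 'f, 'v) clause set \<Rightarrow> ('p, 'f, 'v) clause set \<Rightarrow> ('p, 'f, 'v) atom set \<Rightarrow> ('p, 'f, 'v) atom set \<Rightarrow> int" where
  "S_MDL H B Ep En = int (tp H B Ep) + int (tn H B En) - int (hsize H)"

definition subsumes :: "('p, 'f, 'v) clause \<Rightarrow> ('p, 'f, 'v) clause \<Rightarrow> bool" where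
  "subsumes C1 C2 \<longleftrightarrow> (\<exists>\<theta>. subst_cls \<theta> C1 \<subseteq> C2)"

definition theory_subsumes :: "('p, 'f, 'v) clause set \<Rightarrow> ('p, 'f, 'v) clause set \<Rightarrow> bool" where
  "theory_subsumes T1 T2 \<longleftrightarrow> (\<forall>C2\<in>T2. \<exists>C1\<in>T1. subsumes C1 C2)"

definition generalization :: "('p, 'f, 'v) clause set \<Rightarrow> ('p, 'f, 'v) clause set \<Rightarrow> bool" where
  "generalization T1 T2 \<longleftrightarrow> theory_subsumes T1 T2"

end

theory Submission
  imports Defs
begin

text \<open>Subsumption is sound, so a generalization \<open>H\<^sub>3\<close> of \<open>H\<^sub>1\<close> entails (together with \<open>B\<close>)
  every atom that \<open>H\<^sub>1\<close> entails. Hence \<open>H\<^sub>3\<close> can newly cover at most the \<open>fn(H\<^sub>1)\<close> positive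
  examples missed by \<open>H\<^sub>1\<close> and cannot gain true negatives, which gives
  \<open>S_MDL(H\<^sub>3) \<le> S_MDL(H\<^sub>1) + fn(H\<^sub>1) - (size(H\<^sub>3) - size(H\<^sub>1))\<close>; the hypothesis says
  exactly that \<open>S_MDL(H\<^sub>2)\<close> exceeds this bound.\<close>

lemma subst_trm_subst_trm:
  "subst_trm \<sigma> (subst_trm \<theta> t) = subst_trm (\<lambda>x. subst_trm \<sigma> (\<theta> x)) t"
  by (induction t) auto

lemma subst_lit_subst_lit:
  "subst_lit \<sigma> (subst_lit \<theta> l) = subst_lit (\<lambda>x. subst_trm \<sigma> (\<theta> x)) l"
  by (cases l) (auto simp: subst_atom_def subst_trm_subst_trm)

lemma ground_trm_subst_trm: "ground_subst \<sigma> \<Longrightarrow> ground_trm (subst_trm \<sigma> t)"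
  by (induction t) (auto simp: ground_subst_def ground_trm_def)

lemma ground_subst_comp: "ground_subst \<sigma> \<Longrightarrow> ground_subst (\<lambda>x. subst_trm \<sigma> (\<theta> x))"
  by (simp add: ground_subst_def ground_trm_subst_trm)

lemma clause_true_subsumes:
  fixes C1 C2 :: "('p, 'f, 'v) clause"
  assumes "subsumes C1 C2" and "clause_true I C1"
  shows "clause_true I C2"
  unfolding clause_true_def
proof (intro allI impI)
  fix \<sigma> :: "'v \<Rightarrow> ('f, 'v) trm"
  assume "ground_subst \<sigma>"
  obtain \<theta> where \<theta>: "subst_cls \<theta> C1 \<subseteq> C2"
    using assms(1) subsumes_def by blast
  obtain l where "l \<in> C1" and "lit_true I (subst_lit (\<lambda>x. subst_trm \<sigma> (\<theta> x)) l)"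
    using assms(2) ground_subst_comp[OF \<open>ground_subst \<sigma>\<close>] clause_true_def by blast
  moreover have "subst_lit \<theta> l \<in> C2" if "l \<in> C1"
    using that \<theta> by (auto simp: subst_cls_def)
  ultimately show "\<exists>l\<in>C2. lit_true I (subst_lit \<sigma> l)"
    by (metis subst_lit_subst_lit)
qed

lemma is_model_theory_subsumes:
  "theory_subsumes T1 T2 \<Longrightarrow> is_model I T1 \<Longrightarrow> is_model I T2"
  unfolding theory_subsumes_def is_model_def by (meson clause_true_subsumes)

lemma entails_generalization:
  assumes "generalization H' H" and "entails (H \<union> B) e"
  shows "entails (H' \<union> B) e"
proof -
  have "is_model I (H \<union> B)" if "is_model I (H' \<union> B)" for I
    using that assms(1) is_model_theory_subsumes[of H' H I]
    unfolding generalization_def is_model_def by blast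
  then show ?thesis
    using assms(2) unfolding entails_def by blast
qed

lemma tn_generalization_le:
  assumes "generalization H' H" and "finite En"
  shows "tn H' B En \<le> tn H B En"
  unfolding tn_def
  by (rule card_mono) (use assms(2) entails_generalization[OF assms(1)] in auto)

lemma tp_le_card: "finite Ep \<Longrightarrow> tp H B Ep \<le> card Ep"
  unfolding tp_def by (rule card_mono) auto

lemma S_MDL_generalization_le:
  assumes "generalization H' H" and "finite Ep" and "finite En"
  shows "S_MDL H' B Ep En
           \<le> S_MDL H B Ep En + int (fn H B Ep) - (int (hsize H') - int (hsize H))"
proof -
  have "int (fn H B Ep) = int (card Ep) - int (tp H B Ep)"
    using tp_le_card[OF assms(2)] unfolding fn_def by simp
  then show ?thesis
    using tn_generalization_le[OF assms(1,3), of B] tp_le_card[OF assms(2), of H' B]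
    unfolding S_MDL_def by linarith
qed

theorem proposition4p10:
  fixes B :: "('p, 'f, 'v) clause set"
    and Ep En :: "('p, 'f, 'v) atom set"
    and HDC :: "('p, 'f, 'v) clause set set"
    and H1 H2 H3 :: "('p, 'f, 'v) clause set"
  assumes "horn_program B"
    and "finite Ep" and "\<forall>e\<in>Ep. ground_atom e"
    and "finite En" and "\<forall>e\<in>En. ground_atom e"
    and "\<forall>H\<in>HDC. hypothesis H"
    and "H1 \<in> HDC" and "H2 \<in> HDC" and "H3 \<in> HDC"
    and "generalization H3 H1"
    and "S_MDL H2 B Ep En - S_MDL H1 B Ep En
           > int (fn H1 B Ep) - (int (hsize H3) - int (hsize H1))"
  shows "S_MDL H2 B Ep En > S_MDL H3 B Ep En"
  using S_MDL_generalization_le[OF assms(10,2,4), of B] assms(11) by linarith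

end
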